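(* Let $s,t\in[0,\infty[$, $r\in[1,\infty[$ with $r'=\frac r{r-1}$, and $b\in[-1,1]$. Let $\varkappa(r)=\sup_{u\in]0,1[}\big[(1+u^{1/r})(1+u^{1/r'})(1+u^{1/2})^{-2}\big]$. Then (l1) $\frac4{rr'}(s^{r/2}-t^{r/2})^2\le(s-t)(s^{r-1}-t^{r-1})\le(s^{r/2}-t^{r/2})^2$; (l2) $(s^{r/2}+t^{r/2})^2\le(s+t)(s^{r-1}+t^{r-1})\le\varkappa(r)(s^{r/2}+t^{r/2})^2$; (l3) $\frac4{rr'}(s^r+t^r+2b(st)^{r/2})\le s^r+t^r+b(st^{r-1}+ts^{r-1})$; (l4) $|b|\,|st^{r-1}-ts^{r-1}|\le\frac{|r-2|}{2\sqrt{r-1}}\big[s^r+t^r-\sqrt{1-b^2}(st^{r-1}+ts^{r-1})\big]$; (l5) $s^r+t^r+b(st^{r-1}+ts^{r-1})\le\varkappa(r)(s^r+t^r+2b(st)^{r/2})$. *)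

theory Defs
  imports Complex_Main
begin

text \<open>Real power with the usual convention x^0 = 1 (also for x = 0);
  for positive exponents this is just powr (so 0^a = 0 for a > 0).\<close>
definition pw :: "real \<Rightarrow> real \<Rightarrow> real" where
  "pw x a = (if a = 0 then 1 else x powr a)"

text \<open>For r = 1 the paper's r' = \<infinity>;
  Isabelle's convention x/0 = 0 gives conj_exp 1 = 0, and then 1/r' = 0 and
  4/(r r') = 0, which agree with the values 1/\<infinity> = 0 used in the paper.\<close>
definition conj_exp :: "real \<Rightarrow> real" where
  "conj_exp r = r / (r - 1)"

definition kappa :: "real \<Rightarrow> real" where
  "kappa r = (SUP u\<in>{0<..<1}. (1 + u powr (1/r)) * (1 + u powr (1 / conj_exp r))
                                 / (1 + u powr (1/2))\<^sup>2)"

end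

theory Submission
  imports Defs
begin

text \<open>For \<open>s, t > 0\<close> put \<open>E = (st)\<^bsup>r/2\<^esup>\<close> and \<open>w = ln (s/t) / 2\<close>. Then
  \<open>s\<^sup>r + t\<^sup>r = 2E cosh (rw)\<close>, \<open>st\<^bsup>r-1\<^esup> \<plusminus> ts\<^bsup>r-1\<^esup> = 2E cosh ((2-r)w)\<close> resp. \<open>2E sinh ((2-r)w)\<close>,
  and \<open>(s\<^bsup>r/2\<^esup> \<plusminus> t\<^bsup>r/2\<^esup>)\<^sup>2 = 2E (cosh (rw) \<plusminus> 1)\<close>. With \<open>a = (2-r)/r\<close> we have \<open>(2-r)w = a rw\<close>,
  \<open>|a| \<le> 1\<close> and \<open>1 - a\<^sup>2 = 4/(rr')\<close>, so the inequalities become statements about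
  \<open>cosh z\<close>, \<open>cosh (az)\<close> and \<open>sinh (az)\<close>. The lower bound in (l1) is
  \<open>cosh (az) - 1 \<le> a\<^sup>2 (cosh z - 1)\<close>, which follows from \<open>|sinh (ax)| \<le> |a| |sinh x|\<close>
  (convexity of \<open>sinh\<close> on \<open>[0, \<infinity>)\<close>) at \<open>x = z/2\<close>; (l4) is the same estimate combined with
  Cauchy-Schwarz; the upper bound in (l2) is the definition of \<open>\<kappa>\<close> after the substitution
  \<open>u = e\<^bsup>-2rw\<^esup>\<close>; the remaining bounds in (l1), (l2) are \<open>cosh \<ge> 1\<close>. Finally (l3) and (l5) are
  affine in \<open>b\<close>, and their instances \<open>b = \<plusminus>1\<close> are consequences of (l1) and (l2).\<close>

lemma sinh_mult_le:
  fixes a z :: real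
  assumes "0 \<le> a" "a \<le> 1" "0 \<le> z"
  shows "sinh (a * z) \<le> a * sinh z"
proof -
  let ?h = "\<lambda>x. a * sinh x - sinh (a * x)"
  have "?h 0 \<le> ?h z"
  proof (rule DERIV_nonneg_imp_increasing_open[OF assms(3)])
    fix x assume x: "0 < x" "x < z"
    have "cosh (a * x) \<le> cosh x"
      using x assms by (subst cosh_real_nonneg_le_iff) (auto simp: mult_left_le_one_le)
    then have "0 \<le> a * cosh x - cosh (a * x) * a"
      using assms(1) by (simp add: mult.commute mult_left_mono)
    moreover have "DERIV ?h x :> a * cosh x - cosh (a * x) * a"
      by (auto intro!: derivative_eq_intros)
    ultimately show "\<exists>y. DERIV ?h x :> y \<and> y \<ge> 0" by blast
  qed (intro continuous_intros)
  then show ?thesis by simp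
qed

lemma abs_sinh_mult_le:
  fixes a z :: real
  assumes "\<bar>a\<bar> \<le> 1"
  shows "\<bar>sinh (a * z)\<bar> \<le> \<bar>a\<bar> * \<bar>sinh z\<bar>"
  using sinh_mult_le[of "\<bar>a\<bar>" "\<bar>z\<bar>"] assms by (simp flip: sinh_real_abs add: abs_mult)

lemma cosh_mult_minus_one_le:
  fixes a z :: real
  assumes "\<bar>a\<bar> \<le> 1"
  shows "cosh (a * z) - 1 \<le> a\<^sup>2 * (cosh z - 1)"
proof -
  have half: "cosh x - 1 = 2 * (sinh (x / 2))\<^sup>2" for x :: real
    using cosh_double_cosh[of "x / 2"] by (simp add: cosh_square_eq)
  have "\<bar>sinh (a * (z / 2))\<bar> \<le> \<bar>a\<bar> * \<bar>sinh (z / 2)\<bar>"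
    by (rule abs_sinh_mult_le[OF assms])
  then have "(sinh (a * (z / 2)))\<^sup>2 \<le> a\<^sup>2 * (sinh (z / 2))\<^sup>2"
    by (metis abs_le_square_iff abs_mult power_mult_distrib)
  then show ?thesis
    by (simp add: half[of "a * z"] half[of z])
qed

lemma abs_sinh_add_cosh_mult_le:
  fixes a b c k z :: real
  assumes "k \<ge> 0" "(1 + k\<^sup>2) * a\<^sup>2 = k\<^sup>2" "b\<^sup>2 + c\<^sup>2 \<le> 1"
  shows "\<bar>b\<bar> * \<bar>sinh (a * z)\<bar> + c * (k * cosh (a * z)) \<le> k * cosh z"
proof -
  define S where "S = \<bar>sinh (a * z)\<bar>"
  define C where "C = k * cosh (a * z)"
  have "(1 + k\<^sup>2) * (1 - a\<^sup>2) = 1"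
    using assms(2) by (simp add: algebra_simps)
  then have "a\<^sup>2 \<le> 1"
    by (metis add_pos_nonneg diff_ge_0_iff_ge less_imp_le zero_le_power2 zero_less_mult_pos zero_less_one)
  then have "\<bar>sinh (a * z)\<bar> \<le> \<bar>a\<bar> * \<bar>sinh z\<bar>"
    by (intro abs_sinh_mult_le) (simp add: abs_square_le_1)
  then have "S\<^sup>2 \<le> (\<bar>a\<bar> * \<bar>sinh z\<bar>)\<^sup>2"
    unfolding S_def by (intro power_mono) auto
  then have S2: "S\<^sup>2 \<le> a\<^sup>2 * (sinh z)\<^sup>2"
    by (simp add: power_mult_distrib)
  have "(\<bar>b\<bar> * S + c * C)\<^sup>2 + (\<bar>b\<bar> * C - c * S)\<^sup>2 = (\<bar>b\<bar>\<^sup>2 + c\<^sup>2) * (S\<^sup>2 + C\<^sup>2)"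
    by (simp add: power2_eq_square algebra_simps)
  then have "(\<bar>b\<bar> * S + c * C)\<^sup>2 \<le> (b\<^sup>2 + c\<^sup>2) * (S\<^sup>2 + C\<^sup>2)"
    by (metis le_add_same_cancel1 power2_abs zero_le_power2)
  also have "\<dots> \<le> S\<^sup>2 + C\<^sup>2"
    using assms(3) by (intro mult_left_le_one_le) auto
  also have "\<dots> = (1 + k\<^sup>2) * S\<^sup>2 + k\<^sup>2"
    unfolding C_def S_def by (simp add: power_mult_distrib cosh_square_eq algebra_simps)
  also have "\<dots> \<le> (1 + k\<^sup>2) * (a\<^sup>2 * (sinh z)\<^sup>2) + k\<^sup>2"
    using S2 by (intro add_right_mono mult_left_mono) auto
  also have "\<dots> = k\<^sup>2 * ((sinh z)\<^sup>2 + 1)"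
    unfolding mult.assoc[symmetric] assms(2) by (simp add: algebra_simps)
  also have "\<dots> = (k * cosh z)\<^sup>2"
    by (simp add: cosh_square_eq power_mult_distrib)
  finally have "(\<bar>b\<bar> * S + c * C)\<^sup>2 \<le> (k * cosh z)\<^sup>2" .
  then show ?thesis
    unfolding S_def C_def by (rule power2_le_imp_le) (use assms(1) in simp)
qed

lemma powr_cross_eq_cosh_sinh:
  fixes s t \<alpha> \<beta> :: real
  assumes "0 < s" "0 < t"
  shows "s powr \<alpha> * t powr \<beta> + t powr \<alpha> * s powr \<beta>
      = 2 * (s * t) powr ((\<alpha> + \<beta>) / 2) * cosh ((\<alpha> - \<beta>) / 2 * ln (s / t))"
    and "s powr \<alpha> * t powr \<beta> - t powr \<alpha> * s powr \<beta>
      = 2 * (s * t) powr ((\<alpha> + \<beta>) / 2) * sinh ((\<alpha> - \<beta>) / 2 * ln (s / t))"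
proof -
  define m where "m = (\<alpha> + \<beta>) / 2 * ln (s * t)"
  define \<delta> where "\<delta> = (\<alpha> - \<beta>) / 2 * ln (s / t)"
  have "m + \<delta> = \<alpha> * ln s + \<beta> * ln t" "m - \<delta> = \<alpha> * ln t + \<beta> * ln s"
    using assms by (simp_all add: m_def \<delta>_def ln_mult ln_div field_simps)
  then have "s powr \<alpha> * t powr \<beta> = exp (m + \<delta>)" "t powr \<alpha> * s powr \<beta> = exp (m - \<delta>)"
    using assms by (simp_all add: powr_def exp_add)
  moreover have "(s * t) powr ((\<alpha> + \<beta>) / 2) = exp m"
    using assms by (simp add: powr_def m_def mult.commute)
  ultimately show "s powr \<alpha> * t powr \<beta> + t powr \<alpha> * s powr \<beta>
      = 2 * (s * t) powr ((\<alpha> + \<beta>) / 2) * cosh \<delta>"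
    and "s powr \<alpha> * t powr \<beta> - t powr \<alpha> * s powr \<beta>
      = 2 * (s * t) powr ((\<alpha> + \<beta>) / 2) * sinh \<delta>"
    by (simp_all add: cosh_def sinh_def exp_add exp_diff exp_minus field_simps)
qed

lemma pw_pos: "0 < x \<Longrightarrow> pw x a = x powr a"
  by (simp add: pw_def)

lemma pw_nonneg: "0 \<le> x \<Longrightarrow> 0 \<le> pw x a"
  by (simp add: pw_def)

lemma pw_zero: "a \<noteq> 0 \<Longrightarrow> pw 0 a = 0"
  by (simp add: pw_def)

lemma pw_mult: "0 \<le> s \<Longrightarrow> 0 \<le> t \<Longrightarrow> pw (s * t) a = pw s a * pw t a"
  by (simp add: pw_def powr_mult)

lemma pw_power2: "0 \<le> s \<Longrightarrow> (pw s a)\<^sup>2 = pw s (2 * a)"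
  by (auto simp: pw_def power2_eq_square powr_add[symmetric])

lemma mult_pw_minus_one:
  assumes "0 \<le> s" "1 \<le> r"
  shows "s * pw s (r - 1) = pw s r"
  using assms by (cases "s = 0") (auto simp: pw_def powr_mult_base)

lemma pw_cross_eq_cosh_sinh:
  fixes s t r :: real
  assumes "0 < s" "0 < t"
  defines "E \<equiv> pw (s * t) (r / 2)" and "w \<equiv> ln (s / t) / 2"
  shows "pw s r + pw t r = 2 * E * cosh (r * w)"
    and "s * pw t (r - 1) + t * pw s (r - 1) = 2 * E * cosh ((2 - r) * w)"
    and "s * pw t (r - 1) - t * pw s (r - 1) = 2 * E * sinh ((2 - r) * w)"
proof -
  have st: "0 < s * t" using assms by simp
  show "pw s r + pw t r = 2 * E * cosh (r * w)"
    using powr_cross_eq_cosh_sinh(1)[OF assms(1,2), of r 0] assms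
    by (simp add: E_def w_def pw_pos st)
  have "(1 + (r - 1)) / 2 = r / 2" "(1 - (r - 1)) / 2 * ln (s / t) = (2 - r) * w"
    by (simp_all add: w_def field_simps)
  then show "s * pw t (r - 1) + t * pw s (r - 1) = 2 * E * cosh ((2 - r) * w)"
    and "s * pw t (r - 1) - t * pw s (r - 1) = 2 * E * sinh ((2 - r) * w)"
    using powr_cross_eq_cosh_sinh[OF assms(1,2), of 1 "r - 1"] assms
    by (simp_all add: E_def pw_pos st)
qed

lemma pw_product_expansions:
  fixes s t r :: real
  assumes "0 \<le> s" "0 \<le> t" "1 \<le> r"
  shows "(s - t) * (pw s (r - 1) - pw t (r - 1)) = pw s r + pw t r - (s * pw t (r - 1) + t * pw s (r - 1))"
    and "(s + t) * (pw s (r - 1) + pw t (r - 1)) = pw s r + pw t r + (s * pw t (r - 1) + t * pw s (r - 1))"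
    and "(pw s (r / 2) - pw t (r / 2))\<^sup>2 = pw s r + pw t r - 2 * pw (s * t) (r / 2)"
    and "(pw s (r / 2) + pw t (r / 2))\<^sup>2 = pw s r + pw t r + 2 * pw (s * t) (r / 2)"
  using mult_pw_minus_one[OF assms(1,3)] mult_pw_minus_one[OF assms(2,3)]
    pw_power2[OF assms(1), of "r / 2"] pw_power2[OF assms(2), of "r / 2"] pw_mult[OF assms(1,2)]
  by (simp_all add: power2_diff power2_sum algebra_simps)

lemma four_div_mult_conj_exp:
  fixes r :: real
  assumes "1 \<le> r"
  shows "4 / (r * conj_exp r) = 1 - ((2 - r) / r)\<^sup>2"
proof (cases "r = 1")
  case False
  then have "r - 1 \<noteq> 0" "r \<noteq> 0" using assms by auto
  then show ?thesis by (simp add: conj_exp_def field_simps power2_eq_square)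
qed (simp add: conj_exp_def)

lemma abs_two_minus_div_le_one: "1 \<le> r \<Longrightarrow> \<bar>(2 - r) / r\<bar> \<le> (1::real)"
  by (auto simp: abs_le_iff divide_le_eq le_divide_eq)

definition kappa_quotient :: "real \<Rightarrow> real \<Rightarrow> real" where
  "kappa_quotient r u = (1 + u powr (1/r)) * (1 + u powr (1 / conj_exp r)) / (1 + u powr (1/2))\<^sup>2"

lemma kappa_quotient_le_4:
  assumes "1 \<le> r" "0 < u" "u \<le> 1"
  shows "kappa_quotient r u \<le> 4"
proof -
  have le1: "u powr e \<le> 1" if "0 \<le> e" for e
    using powr_mono2[OF that, of u 1] assms(2,3) by simp
  have "0 \<le> 1 / conj_exp r" using assms(1) by (simp add: conj_exp_def)
  then have "(1 + u powr (1/r)) * (1 + u powr (1 / conj_exp r)) \<le> 2 * 2"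
    using le1 assms(1) by (intro mult_mono) auto
  also have "\<dots> \<le> 4 * (1 + u powr (1/2))\<^sup>2"
    by (simp add: one_le_power)
  finally show ?thesis
    unfolding kappa_quotient_def by (simp add: divide_le_eq add_pos_nonneg)
qed

lemma kappa_quotient_le_kappa:
  assumes "1 \<le> r" "u \<in> {0<..<1}"
  shows "kappa_quotient r u \<le> kappa r"
proof -
  have "bdd_above (kappa_quotient r ` {0<..<1})"
    using kappa_quotient_le_4[OF assms(1)] by (intro bdd_aboveI2[where M = 4]) auto
  then show ?thesis
    unfolding kappa_def kappa_quotient_def[abs_def] using assms(2) by (rule cSUP_upper2) simp
qed

lemma kappa_quotient_exp:
  fixes r w :: real
  assumes "1 \<le> r"
  shows "kappa_quotient r (exp (-2 * r * w)) = (cosh (r * w) + cosh ((2 - r) * w)) / (cosh (r * w) + 1)"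
proof -
  have "r / conj_exp r = r - 1"
    using assms by (cases "r = 1") (auto simp: conj_exp_def field_simps)
  then have "1 / conj_exp r * (-2 * r * w) = -2 * (r - 1) * w"
    by (metis mult.commute mult.left_commute times_divide_eq_right mult_1)
  then have "exp (-2 * r * w) powr (1 / conj_exp r) = exp (-2 * (r - 1) * w)"
    by (simp add: powr_def)
  moreover have "exp (-2 * r * w) powr (1 / r) = exp (-2 * w)" "exp (-2 * r * w) powr (1 / 2) = exp (- r * w)"
    using assms by (simp_all add: powr_def)
  moreover have "(1 + exp (-2 * w)) * (1 + exp (-2 * (r - 1) * w))
      = 2 * exp (- r * w) * (cosh (r * w) + cosh ((2 - r) * w))"
    by (simp add: cosh_def exp_add[symmetric] algebra_simps)
  moreover have "(1 + exp (- r * w))\<^sup>2 = 2 * exp (- r * w) * (cosh (r * w) + 1)"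
    by (simp add: cosh_def power2_eq_square exp_add[symmetric] algebra_simps)
  ultimately show ?thesis
    unfolding kappa_quotient_def by simp
qed

lemma cosh_add_cosh_le_kappa:
  fixes r w :: real
  assumes "1 \<le> r"
  shows "cosh (r * w) + cosh ((2 - r) * w) \<le> kappa r * (cosh (r * w) + 1)"
proof -
  have pos: "cosh (r * v) + cosh ((2 - r) * v) \<le> kappa r * (cosh (r * v) + 1)" if "0 < v" for v
  proof -
    have "exp (-2 * r * v) \<in> {0<..<1}" using assms that by simp
    from kappa_quotient_le_kappa[OF assms this] show ?thesis
      unfolding kappa_quotient_exp[OF assms] by (simp add: divide_le_eq add_pos_pos)
  qed
  consider "0 < w" | "w < 0" | "w = 0" by linarith
  then show ?thesis
  proof cases
    case 2
    with pos[of "- w"] show ?thesis by simp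
  next
    case 3
    have "exp (-2 * r) \<in> {0<..<1}" using assms by simp
    from kappa_quotient_le_kappa[OF assms this]
    have "(cosh r + cosh (2 - r)) / (cosh r + 1) \<le> kappa r"
      using kappa_quotient_exp[OF assms, of 1] by simp
    moreover have "1 \<le> (cosh r + cosh (2 - r)) / (cosh r + 1)"
      using cosh_real_ge_1[of "2 - r"] add_pos_pos[OF cosh_real_pos zero_less_one, of r]
      by (simp add: le_divide_eq)
    ultimately show ?thesis using 3 by simp
  qed (rule pos)
qed

lemma one_le_kappa: "1 \<le> r \<Longrightarrow> 1 \<le> kappa r"
  using cosh_add_cosh_le_kappa[of r 0] by simp

text \<open>Needed for \<open>r = 1\<close>, \<open>t = 0\<close>: there the middle term of (l2) is \<open>2s\<close> while
  \<open>(s\<^bsup>1/2\<^esup> + t\<^bsup>1/2\<^esup>)\<^sup>2 = s\<close>.\<close>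
lemma two_le_kappa_one: "2 \<le> kappa 1"
proof -
  let ?f = "\<lambda>u::real. (1 + u) * 2 / (1 + sqrt u)\<^sup>2"
  have "(?f \<longlongrightarrow> (1 + 0) * 2 / (1 + sqrt 0)\<^sup>2) (at_right 0)"
    by (intro tendsto_intros) auto
  moreover have "\<forall>\<^sub>F u in at_right 0. ?f u \<le> kappa 1"
  proof (rule eventually_mono[OF eventually_at_right_real[of 0 1]])
    fix u :: real assume "u \<in> {0<..<1}"
    moreover from this have "kappa_quotient 1 u = ?f u"
      by (auto simp: kappa_quotient_def conj_exp_def powr_half_sqrt)
    ultimately show "?f u \<le> kappa 1" using kappa_quotient_le_kappa[of 1 u] by simp
  qed simp
  ultimately show ?thesis using tendsto_upperbound by fastforce
qed

lemma two_pw_mult_le_cross_sum: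
  fixes s t r :: real
  assumes "0 \<le> s" "0 \<le> t" "0 < r"
  shows "2 * pw (s * t) (r / 2) \<le> s * pw t (r - 1) + t * pw s (r - 1)"
proof (cases "0 < s \<and> 0 < t")
  case True
  then have "0 < s" "0 < t" by auto
  have "pw (s * t) (r / 2) * 1 \<le> pw (s * t) (r / 2) * cosh ((2 - r) * (ln (s / t) / 2))"
    using assms by (intro mult_left_mono cosh_real_ge_1 pw_nonneg) simp
  then show ?thesis
    unfolding pw_cross_eq_cosh_sinh(2)[OF \<open>0 < s\<close> \<open>0 < t\<close>] by simp
next
  case False
  then have "pw (s * t) (r / 2) = 0" using assms by (auto simp: pw_zero)
  then show ?thesis using assms by (simp add: pw_nonneg)
qed

lemma conj_exp_cross_sum_le:
  fixes s t r :: real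
  assumes "0 \<le> s" "0 \<le> t" "1 \<le> r"
  shows "4 / (r * conj_exp r) * (pw s r + pw t r - 2 * pw (s * t) (r / 2))
    \<le> pw s r + pw t r - (s * pw t (r - 1) + t * pw s (r - 1))"
proof (cases "r = 1")
  case True
  then show ?thesis using assms by (simp add: conj_exp_def pw_def)
next
  case False
  then have "1 < r" using assms by simp
  define a where "a = (2 - r) / r"
  have c: "4 / (r * conj_exp r) = 1 - a\<^sup>2"
    unfolding a_def using four_div_mult_conj_exp[OF assms(3)] .
  have "\<bar>a\<bar> \<le> 1" unfolding a_def using abs_two_minus_div_le_one[OF assms(3)] .
  show ?thesis
  proof (cases "0 < s \<and> 0 < t")
    case True
    then have "0 < s" "0 < t" by auto
    define E where "E = pw (s * t) (r / 2)"
    define w where "w = ln (s / t) / 2"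
    have aw: "(2 - r) * w = a * (r * w)" using \<open>1 < r\<close> by (simp add: a_def)
    have "cosh ((2 - r) * w) - 1 \<le> a\<^sup>2 * (cosh (r * w) - 1)"
      unfolding aw using \<open>\<bar>a\<bar> \<le> 1\<close> by (rule cosh_mult_minus_one_le)
    then have "2 * E * ((1 - a\<^sup>2) * (cosh (r * w) - 1)) \<le> 2 * E * (cosh (r * w) - cosh ((2 - r) * w))"
      using pw_nonneg[of "s * t" "r / 2"] assms unfolding E_def
      by (intro mult_left_mono) (simp_all add: algebra_simps)
    then show ?thesis
      unfolding c pw_cross_eq_cosh_sinh[OF \<open>0 < s\<close> \<open>0 < t\<close>] E_def w_def
      by (simp add: algebra_simps)
  next
    case False
    then have zero: "s * pw t (r - 1) = 0" "t * pw s (r - 1) = 0" "pw (s * t) (r / 2) = 0"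
      using \<open>1 < r\<close> assms by (auto simp: pw_zero)
    have "a\<^sup>2 \<le> 1" using \<open>\<bar>a\<bar> \<le> 1\<close> by (simp add: abs_square_le_1)
    then have "4 / (r * conj_exp r) * (pw s r + pw t r) \<le> pw s r + pw t r"
      unfolding c using assms by (intro mult_left_le_one_le) (auto simp: pw_nonneg)
    then show ?thesis unfolding zero by simp
  qed
qed

lemma cross_sum_le_kappa:
  fixes s t r :: real
  assumes "0 \<le> s" "0 \<le> t" "1 \<le> r"
  shows "pw s r + pw t r + (s * pw t (r - 1) + t * pw s (r - 1))
    \<le> kappa r * (pw s r + pw t r + 2 * pw (s * t) (r / 2))"
proof (cases "0 < s \<and> 0 < t")
  case True
  then have "0 < s" "0 < t" by auto
  define E where "E = pw (s * t) (r / 2)"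
  define w where "w = ln (s / t) / 2"
  have "2 * E * (cosh (r * w) + cosh ((2 - r) * w)) \<le> 2 * E * (kappa r * (cosh (r * w) + 1))"
    using cosh_add_cosh_le_kappa[OF assms(3)] pw_nonneg[of "s * t" "r / 2"] assms
    unfolding E_def by (intro mult_left_mono) auto
  then show ?thesis
    unfolding pw_cross_eq_cosh_sinh[OF \<open>0 < s\<close> \<open>0 < t\<close>] E_def[symmetric] w_def[symmetric]
    by (simp add: algebra_simps)
next
  case False
  then have zero: "pw (s * t) (r / 2) = 0" using assms by (auto simp: pw_zero)
  have "0 \<le> pw s r + pw t r" using assms by (simp add: pw_nonneg)
  show ?thesis
  proof (cases "r = 1")
    case True
    with False assms have "s * pw t (r - 1) + t * pw s (r - 1) = pw s r + pw t r"
      by (auto simp: pw_def)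
    moreover have "2 * (pw s r + pw t r) \<le> kappa 1 * (pw s r + pw t r)"
      using two_le_kappa_one \<open>0 \<le> pw s r + pw t r\<close> by (rule mult_right_mono)
    ultimately show ?thesis
      unfolding zero using True by simp
  next
    case False
    with \<open>\<not> (0 < s \<and> 0 < t)\<close> assms have "s * pw t (r - 1) + t * pw s (r - 1) = 0"
      by (auto simp: pw_zero)
    with \<open>0 \<le> pw s r + pw t r\<close> one_le_kappa[OF assms(3)] show ?thesis
      unfolding zero by (simp add: mult_le_cancel_right1)
  qed
qed

lemma abs_cross_diff_le:
  fixes s t r b :: real
  assumes "0 \<le> s" "0 \<le> t" "1 < r" "\<bar>b\<bar> \<le> 1"
  shows "\<bar>b\<bar> * \<bar>s * pw t (r - 1) - t * pw s (r - 1)\<bar>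
    \<le> \<bar>r - 2\<bar> / (2 * sqrt (r - 1))
      * (pw s r + pw t r - sqrt (1 - b\<^sup>2) * (s * pw t (r - 1) + t * pw s (r - 1)))"
proof -
  define k where "k = \<bar>r - 2\<bar> / (2 * sqrt (r - 1))"
  have "0 \<le> k" using assms(3) by (simp add: k_def)
  show ?thesis
  proof (cases "0 < s \<and> 0 < t")
    case True
    then have "0 < s" "0 < t" by auto
    define E where "E = pw (s * t) (r / 2)"
    define w where "w = ln (s / t) / 2"
    have "k\<^sup>2 = (r - 2)\<^sup>2 / (4 * (r - 1))"
      using assms(3) by (simp add: k_def power_divide power_mult_distrib)
    then have "(1 + k\<^sup>2) * ((2 - r) / r)\<^sup>2 = k\<^sup>2"
      using assms(3) by (simp add: field_simps power2_eq_square)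
    moreover have "b\<^sup>2 + (sqrt (1 - b\<^sup>2))\<^sup>2 \<le> 1"
      using assms(4) by (simp add: abs_square_le_1)
    moreover have "(2 - r) * w = (2 - r) / r * (r * w)" using assms(3) by simp
    ultimately have "\<bar>b\<bar> * \<bar>sinh ((2 - r) * w)\<bar> + sqrt (1 - b\<^sup>2) * (k * cosh ((2 - r) * w))
        \<le> k * cosh (r * w)"
      using abs_sinh_add_cosh_mult_le[OF \<open>0 \<le> k\<close>] by metis
    then have "2 * E * (\<bar>b\<bar> * \<bar>sinh ((2 - r) * w)\<bar> + sqrt (1 - b\<^sup>2) * (k * cosh ((2 - r) * w)))
        \<le> 2 * E * (k * cosh (r * w))"
      using pw_nonneg[of "s * t" "r / 2"] assms unfolding E_def by (intro mult_left_mono) auto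
    then show ?thesis
      using pw_nonneg[of "s * t" "r / 2"] assms
      unfolding k_def[symmetric] pw_cross_eq_cosh_sinh[OF \<open>0 < s\<close> \<open>0 < t\<close>]
        E_def[symmetric] w_def[symmetric]
      by (simp add: abs_mult algebra_simps)
  next
    case False
    then have zero: "s * pw t (r - 1) = 0" "t * pw s (r - 1) = 0"
      using assms by (auto simp: pw_zero)
    show ?thesis
      unfolding zero k_def[symmetric] using assms \<open>0 \<le> k\<close> by (simp add: pw_nonneg)
  qed
qed

lemma affine_le_of_endpoints:
  fixes u v u' v' b :: real
  assumes "u - v \<le> u' - v'" "u + v \<le> u' + v'" "-1 \<le> b" "b \<le> 1"
  shows "u + b * v \<le> u' + b * v'"
proof -
  have "0 \<le> (1 + b) / 2 * ((u' + v') - (u + v)) + (1 - b) / 2 * ((u' - v') - (u - v))"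
    using assms by simp
  also have "\<dots> = (u' + b * v') - (u + b * v)"
    by (simp add: field_simps)
  finally show ?thesis by simp
qed

theorem lemma5:
  fixes s t r b :: real
  assumes "s \<ge> 0" "t \<ge> 0" "r \<ge> 1" "-1 \<le> b" "b \<le> 1"
  shows
   "(4 / (r * conj_exp r) * (pw s (r/2) - pw t (r/2))\<^sup>2 \<le> (s - t) * (pw s (r-1) - pw t (r-1))
     \<and> (s - t) * (pw s (r-1) - pw t (r-1)) \<le> (pw s (r/2) - pw t (r/2))\<^sup>2)
    \<and> ((pw s (r/2) + pw t (r/2))\<^sup>2 \<le> (s + t) * (pw s (r-1) + pw t (r-1))
     \<and> (s + t) * (pw s (r-1) + pw t (r-1)) \<le> kappa r * (pw s (r/2) + pw t (r/2))\<^sup>2)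
    \<and> (4 / (r * conj_exp r) * (pw s r + pw t r + 2 * b * pw (s*t) (r/2))
      \<le> pw s r + pw t r + b * (s * pw t (r-1) + t * pw s (r-1)))
    \<and> (r > 1 \<longrightarrow> \<bar>b\<bar> * \<bar>s * pw t (r-1) - t * pw s (r-1)\<bar>
      \<le> \<bar>r - 2\<bar> / (2 * sqrt (r - 1)) *
         (pw s r + pw t r - sqrt (1 - b\<^sup>2) * (s * pw t (r-1) + t * pw s (r-1))))
    \<and> (pw s r + pw t r + b * (s * pw t (r-1) + t * pw s (r-1))
      \<le> kappa r * (pw s r + pw t r + 2 * b * pw (s*t) (r/2)))"
proof -
  define P S M where "P = pw s r + pw t r" and "S = s * pw t (r - 1) + t * pw s (r - 1)"
    and "M = 2 * pw (s * t) (r / 2)"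
  define c K where "c = 4 / (r * conj_exp r)" and "K = kappa r"
  note expand = pw_product_expansions[OF assms(1-3), folded P_def S_def M_def]
  have "M \<le> S" using two_pw_mult_le_cross_sum[OF assms(1,2)] assms(3) by (simp add: M_def S_def)
  have l1: "c * (P - M) \<le> P - S"
    using conj_exp_cross_sum_le[OF assms(1-3)] by (simp add: c_def P_def S_def M_def)
  have l2: "P + S \<le> K * (P + M)"
    using cross_sum_le_kappa[OF assms(1-3)] by (simp add: K_def P_def S_def M_def)
  have "0 \<le> P + M" "0 \<le> P - M" by (simp_all flip: expand)
  have "c \<le> 1" using four_div_mult_conj_exp[OF assms(3)] by (simp add: c_def)
  have "c * P + b * (c * M) \<le> P + b * S"
    using l1 \<open>M \<le> S\<close> mult_right_mono[OF \<open>c \<le> 1\<close> \<open>0 \<le> P + M\<close>]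
    by (intro affine_le_of_endpoints assms(4,5)) (simp_all add: algebra_simps)
  then have l3: "c * (P + 2 * b * pw (s * t) (r / 2)) \<le> P + b * S"
    by (simp add: M_def algebra_simps)
  have "P + b * S \<le> K * P + b * (K * M)"
    using l2 \<open>M \<le> S\<close> mult_right_mono[OF one_le_kappa[OF assms(3)] \<open>0 \<le> P - M\<close>]
    by (intro affine_le_of_endpoints assms(4,5)) (simp_all add: K_def algebra_simps)
  then have l5: "P + b * S \<le> K * (P + 2 * b * pw (s * t) (r / 2))"
    by (simp add: M_def algebra_simps)
  have l4: "r > 1 \<longrightarrow> \<bar>b\<bar> * \<bar>s * pw t (r-1) - t * pw s (r-1)\<bar>
      \<le> \<bar>r - 2\<bar> / (2 * sqrt (r - 1)) * (P - sqrt (1 - b\<^sup>2) * S)"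
    using abs_cross_diff_le[OF assms(1,2)] assms(4,5) by (simp add: P_def S_def)
  show ?thesis
    unfolding expand P_def[symmetric] S_def[symmetric] c_def[symmetric] K_def[symmetric]
    using l1 l2 l3 l4 l5 \<open>M \<le> S\<close> by auto
qed

end
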